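(* Let $\Omega\subseteq\mathbb{C}$ be an open disc centered at the origin and let $M:\Omega\to\mathbb{C}^{n\times n}$ be analytic, written as $M(\lambda)=M_1f_1(\lambda)+\cdots+M_mf_m(\lambda)$ with constant matrices $M_i\in\mathbb{C}^{n\times n}$ and scalar functions $f_i$ analytic in $\Omega$. Assume $M(0)$ is invertible. Let $\mathcal{B}$ be the operator defined in the context. (1) Suppose $\Lambda\in\mathbb{C}^{p\times p}$ is invertible and $(\Psi,\Lambda^{-1})$ is an invariant pair of $\mathcal{B}$, i.e. $\Psi:\mathbb{R}\to\mathbb{C}^{n\times p}$ has columns in the domain of $\mathcal{B}$ and $(\mathcal{B}\Psi)(\theta)=\Psi(\theta)\Lambda^{-1}$ for all $\theta$. Then there is a matrix $Y\in\mathbb{C}^{n\times p}$ such that $\Psi(\theta)=Y\exp(\theta\Lambda)$. (2) Let $\Lambda\in\mathbb{C}^{p\times p}$ be invertible with $\sigma(\Lambda)\subset\Omega$ and let $Y\in\mathbb{C}^{n\times p}$. Set $\Psi(\theta):=Y\exp(\theta\Lambda)$. Then the following are equivalent: (i) $(\mathcal{B}\Psi)(\theta)=\Psi(\theta)\Lambda^{-1}$ for all $\theta$; (ii) $\mathbb{M}(Y,\Lambda):=M_1Yf_1(\Lambda)+\cdots+M_mYf_m(\Lambda)=0$, where $f_i(\Lambda)$ denotes the matrix function.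
   Context: Define $B:\Omega\to\mathbb{C}^{n\times n}$ by $B(\lambda)=M(0)^{-1}\frac{M(0)-M(\lambda)}{\lambda}$ for $\lambda\neq 0$, extended analytically to $\lambda=0$. The operator $\mathcal{B}$ has domain $\mathcal{D}(\mathcal{B})=\{\varphi\in C^\infty(\mathbb{R},\mathbb{C}^n):\sum_{i=0}^\infty \frac{1}{i!}B^{(i)}(0)\varphi^{(i)}(0)\text{ converges}\}$ and acts by $(\mathcal{B}\varphi)(\theta)=\int_0^\theta\varphi(\hat\theta)\,d\hat\theta+\sum_{i=0}^\infty\frac{1}{i!}B^{(i)}(0)\varphi^{(i)}(0)$. For a matrix-valued function $\Psi=(\psi_1,\ldots,\psi_p)$, $\mathcal{B}\Psi:=(\mathcal{B}\psi_1,\ldots,\mathcal{B}\psi_p)$ columnwise. *)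

theory Defs
  imports "HOL-Analysis.Analysis"
begin

definition cscale :: "complex \<Rightarrow> complex^'b^'a \<Rightarrow> complex^'b^'a" where
  "cscale c A = (\<chi> i j. c * A $ i $ j)"

definition matpow :: "complex^'n^'n \<Rightarrow> nat \<Rightarrow> complex^'n^'n" where
  "matpow A k = (((**) A) ^^ k) (mat 1)"

definition mexp :: "complex^'n^'n \<Rightarrow> complex^'n^'n" where
  "mexp A = (\<Sum>k. (1 / fact k) *\<^sub>R matpow A k)"

text \<open>Matrix function f(A) of a scalar function f analytic on a disc centred at the
  origin, via its Taylor series at 0: f(A) = sum_k f^(k)(0)/k! A^k.\<close>
definition matfun :: "(complex \<Rightarrow> complex) \<Rightarrow> complex^'n^'n \<Rightarrow> complex^'n^'n" where
  "matfun f A = (\<Sum>k. cscale ((deriv ^^ k) f 0 / fact k) (matpow A k))"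

definition mspec :: "complex^'n^'n \<Rightarrow> complex set" where
  "mspec A = {z. det (mat z - A) = 0}"

definition vderiv :: "(real \<Rightarrow> 'a::real_normed_vector) \<Rightarrow> real \<Rightarrow> 'a" where
  "vderiv g t = vector_derivative g (at t)"

definition C_inf :: "(real \<Rightarrow> 'a::real_normed_vector) \<Rightarrow> bool" where
  "C_inf g \<longleftrightarrow> (\<forall>k t. ((vderiv ^^ k) g has_vector_derivative (vderiv ^^ Suc k) g t) (at t))"

definition int0 :: "(real \<Rightarrow> complex^'n) \<Rightarrow> real \<Rightarrow> complex^'n" where
  "int0 g \<theta> = (if 0 \<le> \<theta> then integral {0..\<theta>} g else - integral {\<theta>..0} g)"

definition Bcoef :: "(complex \<Rightarrow> complex^'n^'n) \<Rightarrow> nat \<Rightarrow> complex^'n^'n" where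
  "Bcoef B i = (\<chi> a b. (deriv ^^ i) (\<lambda>z. B z $ a $ b) 0)"

definition Bser :: "(complex \<Rightarrow> complex^'n^'n) \<Rightarrow> (real \<Rightarrow> complex^'n) \<Rightarrow> nat \<Rightarrow> complex^'n" where
  "Bser B \<phi> i = cscale (1 / fact i) (Bcoef B i) *v (vderiv ^^ i) \<phi> 0"

definition opB_dom :: "(complex \<Rightarrow> complex^'n^'n) \<Rightarrow> (real \<Rightarrow> complex^'n) set" where
  "opB_dom B = {\<phi>. C_inf \<phi> \<and> summable (Bser B \<phi>)}"

definition opB :: "(complex \<Rightarrow> complex^'n^'n) \<Rightarrow> (real \<Rightarrow> complex^'n) \<Rightarrow> real \<Rightarrow> complex^'n" where
  "opB B \<phi> \<theta> = int0 \<phi> \<theta> + (\<Sum>i. Bser B \<phi> i)"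

definition opBm :: "(complex \<Rightarrow> complex^'n^'n) \<Rightarrow> (real \<Rightarrow> complex^'p^'n) \<Rightarrow> real \<Rightarrow> complex^'p^'n" where
  "opBm B \<Psi> \<theta> = (\<chi> i k. opB B (\<lambda>t. column k (\<Psi> t)) \<theta> $ i)"

definition inv_pair :: "(complex \<Rightarrow> complex^'n^'n) \<Rightarrow> (real \<Rightarrow> complex^'p^'n) \<Rightarrow> complex^'p^'p \<Rightarrow> bool" where
  "inv_pair B \<Psi> L \<longleftrightarrow> (\<forall>k. (\<lambda>t. column k (\<Psi> t)) \<in> opB_dom B) \<and> (\<forall>\<theta>. opBm B \<Psi> \<theta> = \<Psi> \<theta> ** L)"

end

theory Submission
  imports Defs "HOL-Complex_Analysis.Complex_Analysis"
begin

text \<open>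
  (1) Columns in the domain of \<open>\<B>\<close> are smooth and \<open>\<B>\<close> is an antiderivative plus a constant,
  so differentiating \<open>\<B>\<Psi> = \<Psi>\<Lambda>\<^sup>-\<^sup>1\<close> gives \<open>\<Psi> = \<Psi>'\<Lambda>\<^sup>-\<^sup>1\<close>, i.e. \<open>\<Psi>' = \<Psi>\<Lambda>\<close>,
  whose solutions are \<open>\<Psi>(0) exp(\<theta>\<Lambda>)\<close>.

  (2) For \<open>\<Psi>(\<theta>) = Y exp(\<theta>\<Lambda>)\<close> the integral part of \<open>\<B>\<Psi>\<close> is \<open>\<Psi>(\<theta>)\<Lambda>\<^sup>-\<^sup>1 - Y\<Lambda>\<^sup>-\<^sup>1\<close>,
  so invariance means \<open>\<Sum>\<^sub>i B\<^sup>(\<^sup>i\<^sup>)(0)/i! Y\<Lambda>\<^sup>i = Y\<Lambda>\<^sup>-\<^sup>1\<close>. Since \<open>\<lambda>B(\<lambda>) = M(0)\<^sup>-\<^sup>1(M(0) - M(\<lambda>))\<close>,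
  the Taylor coefficients of \<open>B\<close> are \<open>-M(0)\<^sup>-\<^sup>1\<close> times the shifted ones of \<open>M\<close>, and the series
  equals \<open>-M(0)\<^sup>-\<^sup>1(\<MM>(Y,\<Lambda>) - M(0)Y)\<Lambda>\<^sup>-\<^sup>1\<close>; it equals \<open>Y\<Lambda>\<^sup>-\<^sup>1\<close> iff \<open>\<MM>(Y,\<Lambda>) = 0\<close>.
  All series converge because \<open>\<parallel>\<Lambda>\<^sup>k\<parallel> \<le> C s\<^sup>k\<close> for some \<open>s < r\<close>.
\<close>

no_notation fps_nth (infixl \<open>$\<close> 75)


lemma cscale_nth [simp]: "cscale c A $ i $ j = c * A $ i $ j"
  by (simp add: cscale_def)

lemma cscale_0_left [simp]: "cscale 0 A = 0"
  by (simp add: vec_eq_iff)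

lemma cscale_1 [simp]: "cscale 1 A = A"
  by (simp add: vec_eq_iff)

lemma cscale_cscale: "cscale c (cscale d A) = cscale (c * d) A"
  by (simp add: vec_eq_iff mult.assoc)

lemma matrix_mul_cscale_left: "cscale c A ** B = cscale c (A ** B)"
  by (simp add: vec_eq_iff matrix_matrix_mult_def sum_distrib_left mult.assoc)

lemma matrix_mul_cscale_right: "A ** cscale c B = cscale c (A ** B)"
  by (simp add: vec_eq_iff matrix_matrix_mult_def sum_distrib_left mult_ac)

lemma norm_cscale: "norm (cscale c (A::complex^'n^'m)) = cmod c * norm A"
proof -
  have row: "norm (\<chi> j. c * v $ j) = cmod c * norm v" for v :: "complex^'n"
    by (simp add: norm_vec_def norm_mult L2_set_right_distrib)
  have "norm (cscale c A) = L2_set (\<lambda>i. norm (\<chi> j. c * A $ i $ j)) UNIV"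
    by (simp add: norm_vec_def cscale_def)
  also have "\<dots> = L2_set (\<lambda>i. cmod c * norm (A $ i)) UNIV"
    by (simp only: row)
  also have "\<dots> = cmod c * norm A"
    by (simp add: norm_vec_def L2_set_right_distrib)
  finally show ?thesis .
qed

lemma det_cscale: "det (cscale c (A::complex^'n^'n)) = c ^ CARD('n) * det A"
  by (simp add: det_def sum_distrib_left prod.distrib mult_ac)

lemma matrix_add_rdistrib: "((A::'a::semiring_1^'n^'m) + B) ** C = A ** C + B ** C"
  by (simp add: vec_eq_iff matrix_matrix_mult_def sum.distrib distrib_right)

lemma matrix_diff_ldistrib: "(A::'a::ring_1^'n^'m) ** (B - C) = A ** B - A ** C"
  by (simp add: vec_eq_iff matrix_matrix_mult_def sum_subtractf right_diff_distrib)

lemma matrix_diff_rdistrib: "((A::'a::ring_1^'n^'m) - B) ** C = A ** C - B ** C"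
  by (simp add: vec_eq_iff matrix_matrix_mult_def sum_subtractf left_diff_distrib)

lemma matrix_mul_uminus_left [simp]: "(- (A::'a::ring_1^'n^'m)) ** B = - (A ** B)"
  by (simp add: vec_eq_iff matrix_matrix_mult_def sum_negf)

lemma matrix_mul_uminus_right [simp]: "(A::'a::ring_1^'n^'m) ** (- B) = - (A ** B)"
  by (simp add: vec_eq_iff matrix_matrix_mult_def sum_negf)

lemma matrix_mul_sum_left: "sum f S ** (A::'a::semiring_1^'p^'n) = (\<Sum>x\<in>S. f x ** A)"
  by (induction S rule: infinite_finite_induct) (simp_all add: matrix_add_rdistrib)

lemma matrix_mul_sum_right: "(A::'a::semiring_1^'n^'m) ** sum f S = (\<Sum>x\<in>S. A ** f x)"
  by (induction S rule: infinite_finite_induct) (simp_all add: matrix_add_ldistrib)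

lemma bounded_bilinear_matrix_mul:
  "bounded_bilinear (\<lambda>(A::complex^'n^'m) (B::complex^'p^'n). A ** B)"
  unfolding bilinear_conv_bounded_bilinear[symmetric] bilinear_def
  by (auto intro!: linearI simp: matrix_add_ldistrib matrix_add_rdistrib matrix_scalar_ac
      scalar_matrix_assoc)

lemmas bounded_linear_matrix_mul_left =
  bounded_bilinear.bounded_linear_left[OF bounded_bilinear_matrix_mul]
lemmas bounded_linear_matrix_mul_right =
  bounded_bilinear.bounded_linear_right[OF bounded_bilinear_matrix_mul]

lemma column_eq_matrix_vector_mult_axis: "column k A = (A::'a::semiring_1^'p^'n) *v axis k 1"
  by (simp add: vec_eq_iff column_def matrix_vector_mult_def axis_def if_distrib cong: if_cong)

lemma bounded_linear_column: "bounded_linear (column k :: complex^'p^'n \<Rightarrow> complex^'n)"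
  unfolding linear_conv_bounded_linear[symmetric]
  by (rule linearI) (simp_all add: column_def vec_eq_iff)

lemma matrix_eq_columnI: "(\<And>k. column k A = column k B) \<Longrightarrow> A = B"
  by (simp add: vec_eq_iff column_def)

lemma matrix_inv_mult:
  assumes "invertible (A::'a::semiring_1^'n^'n)"
  shows "A ** matrix_inv A = mat 1" "matrix_inv A ** A = mat 1"
  using someI_ex[OF assms[unfolded invertible_def]] by (simp_all add: matrix_inv_def)

lemma matrix_inv_unique:
  fixes A B :: "'a::semiring_1^'n^'n"
  assumes "A ** B = mat 1" "B ** A = mat 1"
  shows "matrix_inv A = B"
proof -
  have "invertible A" using assms by (auto simp: invertible_def)
  then have "matrix_inv A = (B ** A) ** matrix_inv A" using assms by simp
  also have "\<dots> = B" using matrix_inv_mult[OF \<open>invertible A\<close>] by (simp add: matrix_mul_assoc[symmetric])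
  finally show ?thesis .
qed

lemma matpow_0 [simp]: "matpow A 0 = mat 1"
  by (simp add: matpow_def)

lemma matpow_Suc: "matpow A (Suc k) = A ** matpow A k"
  by (simp add: matpow_def)

lemma matpow_Suc': "matpow A (Suc k) = matpow A k ** A"
  by (induction k) (simp_all add: matpow_Suc matrix_mul_assoc)

lemma matpow_cscale: "matpow (cscale z A) k = cscale (z ^ k) (matpow A k)"
  by (induction k)
    (simp_all add: matpow_Suc matrix_mul_cscale_left matrix_mul_cscale_right cscale_cscale mult.commute)

lemma norm_vec_le_sum: "norm (x::'a::real_normed_vector^'n) \<le> (\<Sum>i\<in>UNIV. norm (x $ i))"
  by (simp add: norm_vec_def L2_set_le_sum)

lemma norm_le_sum_entries: "norm (A::complex^'n^'m) \<le> (\<Sum>i\<in>UNIV. \<Sum>j\<in>UNIV. cmod (A $ i $ j))"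
  by (rule order_trans[OF norm_vec_le_sum]) (intro sum_mono norm_vec_le_sum)

lemma norm_entry_le: "cmod (A $ i $ j) \<le> norm (A::complex^'n^'m)"
  using Finite_Cartesian_Product.norm_nth_le[of "A $ i" j]
    Finite_Cartesian_Product.norm_nth_le[of A i] by linarith

lemma scaleR_matrix_vector_mult: "((r::real) *\<^sub>R (A::complex^'n^'m)) *v v = r *\<^sub>R (A *v v)"
  by (simp add: vec_eq_iff matrix_vector_mult_def scaleR_sum_right)


section \<open>The Banach algebra of square matrices\<close>

text \<open>Square complex matrices with the operator norm form a complete normed algebra, so the
  library's \<^const>\<open>exp\<close> and its calculus apply to them.\<close>

typedef ('n::finite) sqmat = "UNIV :: (complex^'n^'n) set"
  morphisms to_mat of_mat by simp

setup_lifting type_definition_sqmat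

instantiation sqmat :: (finite) real_normed_algebra_1
begin

lift_definition zero_sqmat :: "'a sqmat" is 0 .
lift_definition one_sqmat :: "'a sqmat" is "mat 1" .
lift_definition plus_sqmat :: "'a sqmat \<Rightarrow> 'a sqmat \<Rightarrow> 'a sqmat" is "(+)" .
lift_definition minus_sqmat :: "'a sqmat \<Rightarrow> 'a sqmat \<Rightarrow> 'a sqmat" is "(-)" .
lift_definition uminus_sqmat :: "'a sqmat \<Rightarrow> 'a sqmat" is uminus .
lift_definition times_sqmat :: "'a sqmat \<Rightarrow> 'a sqmat \<Rightarrow> 'a sqmat" is "(**)" .
lift_definition scaleR_sqmat :: "real \<Rightarrow> 'a sqmat \<Rightarrow> 'a sqmat" is "(*\<^sub>R)" .
lift_definition norm_sqmat :: "'a sqmat \<Rightarrow> real" is "\<lambda>A. onorm ((*v) A)" .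
definition dist_sqmat :: "'a sqmat \<Rightarrow> 'a sqmat \<Rightarrow> real" where
  "dist_sqmat a b = norm (a - b)"
definition uniformity_sqmat :: "('a sqmat \<times> 'a sqmat) filter" where
  "uniformity_sqmat = (INF e\<in>{0 <..}. principal {(x, y). dist x y < e})"
definition open_sqmat :: "'a sqmat set \<Rightarrow> bool" where
  "open_sqmat S = (\<forall>x\<in>S. \<forall>\<^sub>F (x', y) in uniformity. x' = x \<longrightarrow> y \<in> S)"
definition sgn_sqmat :: "'a sqmat \<Rightarrow> 'a sqmat" where
  "sgn_sqmat x = scaleR (inverse (norm x)) x"

instance
proof
  fix a b c :: "'a sqmat" and r s :: real
  show "a * b * c = a * (b * c)" by transfer (simp add: matrix_mul_assoc)
  show "(a + b) * c = a * c + b * c" by transfer (rule matrix_add_rdistrib)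
  show "a * (b + c) = a * b + a * c" by transfer (rule matrix_add_ldistrib)
  show "1 * a = a" "a * 1 = a" by (transfer, simp)+
  show "(0::'a sqmat) \<noteq> 1" by transfer (simp add: vec_eq_iff mat_def)
  show "a + b + c = a + (b + c)" "a + b = b + a" "0 + a = a" "- a + a = 0" "a - b = a + - b"
    by (transfer, simp)+
  show "r *\<^sub>R (a + b) = r *\<^sub>R a + r *\<^sub>R b" by transfer (rule scaleR_add_right)
  show "(r + s) *\<^sub>R a = r *\<^sub>R a + s *\<^sub>R a" by transfer (rule scaleR_add_left)
  show "r *\<^sub>R s *\<^sub>R a = (r * s) *\<^sub>R a" "1 *\<^sub>R a = a" by (transfer, simp)+
  show "r *\<^sub>R a * b = r *\<^sub>R (a * b)" by transfer (rule scalar_matrix_assoc[symmetric])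
  show "a * r *\<^sub>R b = r *\<^sub>R (a * b)" by transfer (simp add: matrix_scalar_ac scalar_matrix_assoc)
  show "dist a b = norm (a - b)" by (simp add: dist_sqmat_def)
  show "sgn a = inverse (norm a) *\<^sub>R a" by (simp add: sgn_sqmat_def)
  show "(uniformity :: ('a sqmat \<times> 'a sqmat) filter) =
      (INF e\<in>{0 <..}. principal {(x, y). dist x y < e})"
    by (simp add: uniformity_sqmat_def)
  show "open U = (\<forall>x\<in>U. \<forall>\<^sub>F (x', y) in uniformity. x' = x \<longrightarrow> y \<in> U)" for U :: "'a sqmat set"
    by (simp add: open_sqmat_def)
  show "(norm a = 0) = (a = 0)"
    by transfer (simp add: onorm_eq_0 matrix_eq)
  show "norm (a + b) \<le> norm a + norm b"
  proof transfer
    fix a b :: "complex^'a^'a"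
    have "(*v) (a + b) = (\<lambda>v. a *v v + b *v v)"
      by (simp add: fun_eq_iff matrix_vector_mult_add_rdistrib)
    then show "onorm ((*v) (a + b)) \<le> onorm ((*v) a) + onorm ((*v) b)"
      by (simp add: onorm_triangle)
  qed
  show "norm (r *\<^sub>R a) = \<bar>r\<bar> * norm a"
  proof transfer
    fix r and a :: "complex^'a^'a"
    have "(*v) (r *\<^sub>R a) = (\<lambda>v. r *\<^sub>R (a *v v))"
      by (simp add: fun_eq_iff scaleR_matrix_vector_mult)
    then show "onorm ((*v) (r *\<^sub>R a)) = \<bar>r\<bar> * onorm ((*v) a)"
      by (simp add: onorm_scaleR)
  qed
  show "norm (a * b) \<le> norm a * norm b"
  proof transfer
    fix a b :: "complex^'a^'a"
    have "(*v) (a ** b) = (*v) a \<circ> (*v) b"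
      by (simp add: fun_eq_iff matrix_vector_mul_assoc)
    then show "onorm ((*v) (a ** b)) \<le> onorm ((*v) a) * onorm ((*v) b)"
      by (simp add: onorm_compose)
  qed
  show "norm (1::'a sqmat) = 1"
  proof transfer
    have "(*v) (mat 1 :: complex^'a^'a) = (\<lambda>v. v)"
      by (simp add: fun_eq_iff)
    then show "onorm ((*v) (mat 1 :: complex^'a^'a)) = 1"
      by (simp add: onorm_id)
  qed
qed

end

lemma to_mat_add [simp]: "to_mat (a + b) = to_mat a + to_mat b"
  by (simp add: plus_sqmat.rep_eq)

lemma to_mat_mult [simp]: "to_mat (a * b) = to_mat a ** to_mat b"
  by (simp add: times_sqmat.rep_eq)

lemma to_mat_one [simp]: "to_mat 1 = mat 1"
  by (simp add: one_sqmat.rep_eq)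

lemma to_mat_scaleR [simp]: "to_mat (r *\<^sub>R a) = r *\<^sub>R to_mat a"
  by (simp add: scaleR_sqmat.rep_eq)

lemma to_mat_power: "to_mat (a ^ k) = matpow (to_mat a) k"
  by (induction k) (simp_all add: matpow_Suc)

lemmas [simp] = of_mat_inverse[simplified] to_mat_inverse

lemma of_mat_add: "of_mat (A + B) = of_mat A + of_mat B"
  by (metis to_mat_add to_mat_inverse of_mat_inverse UNIV_I)

lemma of_mat_scaleR: "of_mat (r *\<^sub>R A) = r *\<^sub>R of_mat A"
  by (metis to_mat_scaleR to_mat_inverse of_mat_inverse UNIV_I)

lemma norm_entry_le_norm_sqmat: "cmod (to_mat a $ i $ j) \<le> norm a"
proof -
  have "norm (axis j (1::complex) :: complex^'a) \<le> 1"
    using norm_vec_le_sum[of "axis j (1::complex) :: complex^'a"]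
    by (simp add: axis_def if_distrib cong: if_cong)
  then have "cmod (to_mat a $ i $ j) \<le> onorm ((*v) (to_mat a)) * 1"
    using Finite_Cartesian_Product.norm_nth_le[of "to_mat a *v axis j 1" i]
      onorm[OF matrix_vector_mul_bounded_linear, of "to_mat a" "axis j 1"]
      onorm_pos_le[OF matrix_vector_mul_bounded_linear, of "to_mat a"]
    by (simp add: column_eq_matrix_vector_mult_axis[symmetric] column_def)
  then show ?thesis by (simp add: norm_sqmat.rep_eq)
qed

lemma norm_sqmat_le_sum_entries: "norm a \<le> (\<Sum>i\<in>UNIV. \<Sum>j\<in>UNIV. cmod (to_mat a $ i $ j))"
  unfolding norm_sqmat.rep_eq
proof (rule onorm_bound)
  fix v
  have "norm (to_mat a *v v) \<le> (\<Sum>i\<in>UNIV. norm ((to_mat a *v v) $ i))"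
    by (rule norm_vec_le_sum)
  also have "\<dots> \<le> (\<Sum>i\<in>UNIV. \<Sum>j\<in>UNIV. cmod (to_mat a $ i $ j) * norm v)"
  proof (rule sum_mono)
    fix i
    have "norm ((to_mat a *v v) $ i) \<le> (\<Sum>j\<in>UNIV. cmod (to_mat a $ i $ j * v $ j))"
      unfolding matrix_vector_mult_def by (simp add: norm_sum)
    also have "\<dots> \<le> (\<Sum>j\<in>UNIV. cmod (to_mat a $ i $ j) * norm v)"
      by (intro sum_mono)
        (simp add: norm_mult mult_left_mono[OF Finite_Cartesian_Product.norm_nth_le])
    finally show "norm ((to_mat a *v v) $ i) \<le> (\<Sum>j\<in>UNIV. cmod (to_mat a $ i $ j) * norm v)" .
  qed
  finally show "norm (to_mat a *v v) \<le> (\<Sum>i\<in>UNIV. \<Sum>j\<in>UNIV. cmod (to_mat a $ i $ j)) * norm v"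
    by (simp add: sum_distrib_right)
qed (simp add: sum_nonneg)

lemma bounded_linear_to_mat: "bounded_linear (to_mat :: 'n::finite sqmat \<Rightarrow> complex^'n^'n)"
proof (rule bounded_linear_intro[where K="of_nat (CARD('n) * CARD('n))"])
  fix a :: "'n sqmat"
  have "norm (to_mat a) \<le> (\<Sum>i\<in>(UNIV::'n set). \<Sum>j\<in>(UNIV::'n set). norm a)"
    by (rule order_trans[OF norm_le_sum_entries]) (intro sum_mono norm_entry_le_norm_sqmat)
  then show "norm (to_mat a) \<le> norm a * of_nat (CARD('n) * CARD('n))"
    by (simp add: algebra_simps)
qed simp_all

lemma bounded_linear_of_mat: "bounded_linear (of_mat :: complex^'n^'n \<Rightarrow> 'n::finite sqmat)"
proof (rule bounded_linear_intro[where K="of_nat (CARD('n) * CARD('n))"])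
  fix A :: "complex^'n^'n"
  have "norm (of_mat A) \<le> (\<Sum>i\<in>UNIV. \<Sum>j\<in>UNIV. cmod (A $ i $ j))"
    using norm_sqmat_le_sum_entries[of "of_mat A"] by simp
  also have "\<dots> \<le> (\<Sum>i\<in>(UNIV::'n set). \<Sum>j\<in>(UNIV::'n set). norm A)"
    by (intro sum_mono norm_entry_le)
  finally have "norm (of_mat A) \<le> (\<Sum>i\<in>(UNIV::'n set). \<Sum>j\<in>(UNIV::'n set). norm A)" .
  then show "norm (of_mat A) \<le> norm A * of_nat (CARD('n) * CARD('n))"
    by (simp add: algebra_simps)
qed (simp_all add: of_mat_add of_mat_scaleR)

instance sqmat :: (finite) banach
proof
  fix X :: "nat \<Rightarrow> 'a sqmat"
  assume "Cauchy X"
  then have "convergent (\<lambda>n. to_mat (X n))"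
    using bounded_linear.Cauchy[OF bounded_linear_to_mat] Cauchy_convergent_iff by blast
  then obtain L where "(\<lambda>n. to_mat (X n)) \<longlonglongrightarrow> L"
    by (auto simp: convergent_def)
  from bounded_linear.tendsto[OF bounded_linear_of_mat this]
  show "convergent X" by (auto simp: convergent_def)
qed

lemma mexp_eq_exp: "mexp A = to_mat (exp (of_mat A))"
proof -
  have "to_mat (exp (of_mat A)) = (\<Sum>k. to_mat (of_mat A ^ k /\<^sub>R fact k))"
    unfolding exp_def by (rule bounded_linear.suminf[OF bounded_linear_to_mat summable_exp_generic])
  then show ?thesis by (simp add: mexp_def to_mat_power divide_inverse)
qed


lemma mexp_scaleR: "mexp (t *\<^sub>R \<Lambda>) = to_mat (exp (t *\<^sub>R of_mat \<Lambda>))"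
  by (simp add: mexp_eq_exp of_mat_scaleR)

lemma mexp_zero [simp]: "mexp 0 = mat 1"
  by (simp add: mexp_eq_exp of_mat_scaleR[of 0, simplified])

lemma has_vector_derivative_mexp:
  fixes Y :: "complex^'p^'n" and P :: "complex^'q^'p"
  shows "((\<lambda>t. Y ** mexp (t *\<^sub>R \<Lambda>) ** P) has_vector_derivative
      Y ** mexp (t *\<^sub>R \<Lambda>) ** (\<Lambda> ** P)) (at t within S)"
proof -
  have lin: "bounded_linear (\<lambda>x. Y ** to_mat x ** P)"
    by (intro bounded_linear_compose[OF bounded_linear_matrix_mul_left]
        bounded_linear_compose[OF bounded_linear_matrix_mul_right] bounded_linear_to_mat)
  from bounded_linear.has_vector_derivative[OF lin
      exp_scaleR_has_vector_derivative_right[of "of_mat \<Lambda>" t S]]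
  show ?thesis by (simp add: mexp_scaleR matrix_mul_assoc)
qed

lemma matrix_ode_solution_eq_mexp:
  fixes \<Psi> :: "real \<Rightarrow> complex^'p^'n" and \<Lambda> :: "complex^'p^'p"
  assumes deriv: "\<And>t. (\<Psi> has_vector_derivative \<Psi> t ** \<Lambda>) (at t)"
  shows "\<Psi> t = \<Psi> 0 ** mexp (t *\<^sub>R \<Lambda>)"
proof -
  define E where "E t = to_mat (exp (t *\<^sub>R - of_mat \<Lambda>))" for t
  have dE: "(E has_vector_derivative - \<Lambda> ** E t) (at t)" for t
    using bounded_linear.has_vector_derivative[OF bounded_linear_to_mat
        exp_scaleR_has_vector_derivative_left, of "- of_mat \<Lambda>" t]
    by (simp add: E_def[abs_def] of_mat_scaleR[of "-1", simplified] uminus_sqmat.rep_eq)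
  have "((\<lambda>t. \<Psi> t ** E t) has_vector_derivative \<Psi> t ** (- \<Lambda> ** E t) + \<Psi> t ** \<Lambda> ** E t) (at t)"
    for t by (rule bounded_bilinear.has_vector_derivative[OF bounded_bilinear_matrix_mul deriv dE])
  then have "((\<lambda>t. \<Psi> t ** E t) has_derivative (\<lambda>_. 0)) (at t)" for t
    by (simp add: matrix_mul_assoc has_vector_derivative_def)
  then have "\<Psi> t ** E t = \<Psi> 0 ** E 0"
    using has_derivative_zero_constant[of UNIV "\<lambda>t. \<Psi> t ** E t"] by force
  moreover have "E t ** mexp (t *\<^sub>R \<Lambda>) = mat 1"
    using exp_minus_inverse[of "- (t *\<^sub>R of_mat \<Lambda>)"]
    by (simp add: E_def mexp_scaleR flip: to_mat_mult)
  ultimately have "\<Psi> t = \<Psi> 0 ** E 0 ** mexp (t *\<^sub>R \<Lambda>)"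
    by (metis matrix_mul_assoc matrix_mul_rid)
  then show ?thesis by (simp add: E_def)
qed


lemma int0_eq_diff:
  assumes "\<And>t. (G has_vector_derivative g t) (at t)"
  shows "int0 g \<theta> = G \<theta> - G 0"
proof (cases "0 \<le> \<theta>")
  case True
  have "(g has_integral G \<theta> - G 0) {0..\<theta>}"
    using True by (intro fundamental_theorem_of_calculus) (auto intro: has_vector_derivative_at_within assms)
  with True show ?thesis by (simp add: int0_def integral_unique)
next
  case False
  have "(g has_integral G 0 - G \<theta>) {\<theta>..0}"
    using False by (intro fundamental_theorem_of_calculus) (auto intro: has_vector_derivative_at_within assms)
  with False show ?thesis by (simp add: int0_def integral_unique)
qed

lemma int0_has_vector_derivative:
  fixes \<phi> :: "real \<Rightarrow> complex^'n"
  assumes "continuous_on UNIV \<phi>"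
  shows "(int0 \<phi> has_vector_derivative \<phi> x) (at x)"
proof -
  define a where "a = - \<bar>x\<bar> - 1"
  have a: "a < 0" "a < x" by (auto simp: a_def)
  have cont: "continuous_on {a..b} \<phi>" for b using assms continuous_on_subset by blast
  have int0_eq: "int0 \<phi> y = integral {a..y} \<phi> - integral {a..0} \<phi>" if "a \<le> y" for y
  proof -
    have int: "\<phi> integrable_on {a..max y 0}" by (rule integrable_continuous_interval[OF cont])
    show ?thesis
    proof (cases "0 \<le> y")
      case True
      have "integral {a..0} \<phi> + integral {0..y} \<phi> = integral {a..y} \<phi>"
        using True a by (intro Henstock_Kurzweil_Integration.integral_combine
            integrable_on_subinterval[OF int]) auto
      then show ?thesis using True by (simp add: int0_def algebra_simps)
    next
      case False
      have "integral {a..y} \<phi> + integral {y..0} \<phi> = integral {a..0} \<phi>"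
        using False that by (intro Henstock_Kurzweil_Integration.integral_combine
            integrable_on_subinterval[OF int]) auto
      then show ?thesis using False by (simp add: int0_def algebra_simps)
    qed
  qed
  have "((\<lambda>y. integral {a..y} \<phi>) has_vector_derivative \<phi> x) (at x within {a..x + 1})"
    by (rule integral_has_vector_derivative[OF cont]) (use a in simp)
  then have "((\<lambda>y. integral {a..y} \<phi>) has_vector_derivative \<phi> x) (at x within {a<..<x + 1})"
    by (rule has_vector_derivative_within_subset) (use a in auto)
  then have "((\<lambda>y. integral {a..y} \<phi>) has_vector_derivative \<phi> x) (at x)"
    using a by (subst (asm) at_within_open) auto
  from has_vector_derivative_diff[OF this has_vector_derivative_const]
  have "((\<lambda>y. integral {a..y} \<phi> - integral {a..0} \<phi>) has_vector_derivative \<phi> x) (at x)"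
    by simp
  then show ?thesis
  proof (rule has_vector_derivative_transform_within_open[where S="{a<..}"])
    show "y \<in> {a<..} \<Longrightarrow> integral {a..y} \<phi> - integral {a..0} \<phi> = int0 \<phi> y" for y
      using int0_eq[of y] by simp
  qed (use a in auto)
qed

lemma C_inf_has_vector_derivative:
  assumes "C_inf \<phi>"
  shows "(\<phi> has_vector_derivative vderiv \<phi> t) (at t)"
proof -
  have "((vderiv ^^ 0) \<phi> has_vector_derivative (vderiv ^^ Suc 0) \<phi> t) (at t)"
    using assms unfolding C_inf_def by blast
  then show ?thesis by simp
qed

lemma opB_has_vector_derivative:
  fixes \<phi> :: "real \<Rightarrow> complex^'n"
  assumes "\<phi> \<in> opB_dom B"
  shows "(opB B \<phi> has_vector_derivative \<phi> \<theta>) (at \<theta>)"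
proof -
  have "C_inf \<phi>" using assms by (simp add: opB_dom_def)
  then have "continuous_on UNIV \<phi>"
    by (intro continuous_at_imp_continuous_on ballI
        has_vector_derivative_continuous[OF C_inf_has_vector_derivative])
  from has_vector_derivative_add[OF int0_has_vector_derivative[OF this] has_vector_derivative_const]
  show ?thesis by (simp add: opB_def[abs_def])
qed

lemma has_vector_derivative_columnwise:
  fixes F F' :: "real \<Rightarrow> complex^'p^'n"
  assumes "\<And>k. ((\<lambda>t. column k (F t)) has_vector_derivative column k (F' t)) (at t)"
  shows "(F has_vector_derivative F' t) (at t)"
proof -
  define emb :: "'p \<Rightarrow> complex^'n \<Rightarrow> complex^'p^'n"
    where "emb k v = (\<chi> i j. if j = k then v $ i else 0)" for k v
  have lin: "bounded_linear (emb k)" for k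
    unfolding linear_conv_bounded_linear[symmetric] by (rule linearI) (simp_all add: emb_def vec_eq_iff)
  have expand: "X = (\<Sum>k\<in>UNIV. emb k (column k X))" for X :: "complex^'p^'n"
    by (simp add: vec_eq_iff emb_def column_def)
  have "((\<lambda>t. \<Sum>k\<in>UNIV. emb k (column k (F t))) has_vector_derivative
      (\<Sum>k\<in>UNIV. emb k (column k (F' t)))) (at t)"
    by (rule has_vector_derivative_sum, rule bounded_linear.has_vector_derivative[OF lin assms])
  moreover have "(\<lambda>t. \<Sum>k\<in>UNIV. emb k (column k (F t))) = F"
    using expand by (intro ext) (rule sym)
  ultimately show ?thesis
    using expand[of "F' t"] by simp
qed


lemma column_opBm: "column k (opBm B \<Psi> \<theta>) = opB B (\<lambda>t. column k (\<Psi> t)) \<theta>"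
  by (simp add: column_def opBm_def vec_eq_iff)

lemma inv_pair_imp_mexp:
  fixes \<Psi> :: "real \<Rightarrow> complex^'p^'n" and \<Lambda> :: "complex^'p^'p"
  assumes inv: "invertible \<Lambda>" and pair: "inv_pair B \<Psi> (matrix_inv \<Lambda>)"
  shows "\<Psi> \<theta> = \<Psi> 0 ** mexp (\<theta> *\<^sub>R \<Lambda>)"
proof -
  let ?L = "matrix_inv \<Lambda>"
  have dom: "(\<lambda>t. column k (\<Psi> t)) \<in> opB_dom B" for k
    using pair by (simp add: inv_pair_def)
  define \<Psi>' where "\<Psi>' t = (\<chi> i k. vderiv (\<lambda>s. column k (\<Psi> s)) t $ i)" for t
  have "column k (\<Psi>' t) = vderiv (\<lambda>s. column k (\<Psi> s)) t" for k t
    by (simp add: \<Psi>'_def column_def)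
  then have d\<Psi>: "(\<Psi> has_vector_derivative \<Psi>' t) (at t)" for t
    using dom by (intro has_vector_derivative_columnwise) (simp add: C_inf_has_vector_derivative opB_dom_def)
  have \<Psi>_eq: "\<Psi> t = \<Psi>' t ** ?L" for t
  proof (rule matrix_eq_columnI)
    fix k
    have "opB B (\<lambda>s. column k (\<Psi> s)) = (\<lambda>\<theta>. column k (\<Psi> \<theta> ** ?L))"
      using pair by (auto simp: inv_pair_def fun_eq_iff simp flip: column_opBm)
    with opB_has_vector_derivative[OF dom]
    have "((\<lambda>\<theta>. column k (\<Psi> \<theta> ** ?L)) has_vector_derivative column k (\<Psi> t)) (at t)"
      by metis
    moreover have "((\<lambda>\<theta>. column k (\<Psi> \<theta> ** ?L)) has_vector_derivative column k (\<Psi>' t ** ?L)) (at t)"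
      by (rule bounded_linear.has_vector_derivative[OF bounded_linear_compose[OF
            bounded_linear_column bounded_linear_matrix_mul_left] d\<Psi>])
    ultimately show "column k (\<Psi> t) = column k (\<Psi>' t ** ?L)"
      by (rule vector_derivative_unique_at)
  qed
  have "\<Psi>' t = \<Psi> t ** \<Lambda>" for t
    using matrix_inv_mult[OF inv] by (simp add: \<Psi>_eq matrix_mul_assoc[symmetric])
  with d\<Psi> show ?thesis
    by (intro matrix_ode_solution_eq_mexp) simp
qed

lemma has_vector_derivative_column_mexp:
  fixes Y :: "complex^'p^'n" and P :: "complex^'q^'p"
  shows "((\<lambda>t. column k (Y ** mexp (t *\<^sub>R \<Lambda>) ** P)) has_vector_derivative
      column k (Y ** mexp (t *\<^sub>R \<Lambda>) ** (\<Lambda> ** P))) (at t)"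
  by (rule bounded_linear.has_vector_derivative[OF bounded_linear_column has_vector_derivative_mexp])

lemma vderiv_column_mexp:
  fixes Y :: "complex^'p^'n"
  shows "(vderiv ^^ i) (\<lambda>t. column k (Y ** mexp (t *\<^sub>R \<Lambda>))) =
    (\<lambda>t. column k (Y ** mexp (t *\<^sub>R \<Lambda>) ** matpow \<Lambda> i))"
proof (induction i)
  case (Suc i)
  have "(vderiv ^^ Suc i) (\<lambda>t. column k (Y ** mexp (t *\<^sub>R \<Lambda>))) =
      vderiv (\<lambda>t. column k (Y ** mexp (t *\<^sub>R \<Lambda>) ** matpow \<Lambda> i))"
    using Suc by simp
  also have "\<dots> = (\<lambda>t. column k (Y ** mexp (t *\<^sub>R \<Lambda>) ** (\<Lambda> ** matpow \<Lambda> i)))"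
    unfolding vderiv_def by (rule ext, rule vector_derivative_at, rule has_vector_derivative_column_mexp)
  finally show ?case by (simp add: matpow_Suc)
qed simp

lemma C_inf_column_mexp: "C_inf (\<lambda>t. column k ((Y::complex^'p^'n) ** mexp (t *\<^sub>R \<Lambda>)))"
  unfolding C_inf_def vderiv_column_mexp matpow_Suc by (intro allI has_vector_derivative_column_mexp)

lemma int0_column_mexp:
  fixes Y :: "complex^'p^'n" and \<Lambda> :: "complex^'p^'p"
  assumes "invertible \<Lambda>"
  shows "int0 (\<lambda>t. column k (Y ** mexp (t *\<^sub>R \<Lambda>))) \<theta> =
    column k (Y ** mexp (\<theta> *\<^sub>R \<Lambda>) ** matrix_inv \<Lambda>) - column k (Y ** matrix_inv \<Lambda>)"
  using int0_eq_diff[OF has_vector_derivative_column_mexp[of k Y \<Lambda> "matrix_inv \<Lambda>"]]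
  by (simp add: matrix_inv_mult[OF assms])

lemma opB_column_mexp:
  fixes Y :: "complex^'p^'n" and \<Lambda> :: "complex^'p^'p"
  assumes inv: "invertible \<Lambda>"
    and sums: "(\<lambda>i. cscale (1 / fact i) (Bcoef B i) ** Y ** matpow \<Lambda> i) sums S"
  shows "(\<lambda>t. column k (Y ** mexp (t *\<^sub>R \<Lambda>))) \<in> opB_dom B"
    and "opB B (\<lambda>t. column k (Y ** mexp (t *\<^sub>R \<Lambda>))) \<theta> =
      column k (Y ** mexp (\<theta> *\<^sub>R \<Lambda>) ** matrix_inv \<Lambda> - Y ** matrix_inv \<Lambda> + S)"
proof -
  have "Bser B (\<lambda>t. column k (Y ** mexp (t *\<^sub>R \<Lambda>))) =
      (\<lambda>i. column k (cscale (1 / fact i) (Bcoef B i) ** Y ** matpow \<Lambda> i))"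
    unfolding Bser_def vderiv_column_mexp
    by (simp add: fun_eq_iff column_eq_matrix_vector_mult_axis matrix_vector_mul_assoc matrix_mul_assoc)
  then have ser: "Bser B (\<lambda>t. column k (Y ** mexp (t *\<^sub>R \<Lambda>))) sums column k S"
    using bounded_linear.sums[OF bounded_linear_column sums] by simp
  then show "(\<lambda>t. column k (Y ** mexp (t *\<^sub>R \<Lambda>))) \<in> opB_dom B"
    by (auto simp: opB_dom_def C_inf_column_mexp sums_summable)
  show "opB B (\<lambda>t. column k (Y ** mexp (t *\<^sub>R \<Lambda>))) \<theta> =
      column k (Y ** mexp (\<theta> *\<^sub>R \<Lambda>) ** matrix_inv \<Lambda> - Y ** matrix_inv \<Lambda> + S)"
    using ser unfolding opB_def int0_column_mexp[OF inv] sums_iff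
    by (simp add: column_def vec_eq_iff)
qed

lemma inv_pair_mexp_iff:
  fixes Y :: "complex^'p^'n" and \<Lambda> :: "complex^'p^'p"
  assumes inv: "invertible \<Lambda>"
    and sums: "(\<lambda>i. cscale (1 / fact i) (Bcoef B i) ** Y ** matpow \<Lambda> i) sums S"
  shows "inv_pair B (\<lambda>\<theta>. Y ** mexp (\<theta> *\<^sub>R \<Lambda>)) (matrix_inv \<Lambda>) \<longleftrightarrow> S = Y ** matrix_inv \<Lambda>"
proof -
  have "opBm B (\<lambda>\<theta>. Y ** mexp (\<theta> *\<^sub>R \<Lambda>)) \<theta> =
      Y ** mexp (\<theta> *\<^sub>R \<Lambda>) ** matrix_inv \<Lambda> - Y ** matrix_inv \<Lambda> + S" for \<theta>
    by (rule matrix_eq_columnI) (simp add: column_opBm opB_column_mexp[OF inv sums])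
  then show ?thesis
    using opB_column_mexp(1)[OF inv sums] by (auto simp: inv_pair_def)
qed


section \<open>Powers of a matrix with spectrum in a disc\<close>

lemma holomorphic_on_det:
  assumes "\<And>i j. (\<lambda>z. F z $ i $ j) holomorphic_on S"
  shows "(\<lambda>z. det (F z :: complex^'n^'n)) holomorphic_on S"
  unfolding det_def by (intro holomorphic_intros assms)

lemma holomorphic_on_mat_minus_cscale [holomorphic_intros]:
  "(\<lambda>z. (mat 1 - cscale z A) $ i $ j) holomorphic_on S"
  by (auto simp: mat_def intro!: holomorphic_intros)

lemma compact_mspec:
  assumes "mspec (A::complex^'n^'n) \<subseteq> ball 0 r"
  shows "compact (mspec A)"
proof -
  have "(\<lambda>z. det (mat z - A)) holomorphic_on UNIV"
  proof (rule holomorphic_on_det)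
    fix i j
    have "(\<lambda>z. (mat z - A) $ i $ j) = (\<lambda>z. of_bool (i = j) * z - A $ i $ j)"
      by (auto simp: mat_def fun_eq_iff)
    then show "(\<lambda>z. (mat z - A) $ i $ j) holomorphic_on UNIV"
      by (auto intro!: holomorphic_intros)
  qed
  then have "closed (mspec A)"
    unfolding mspec_def
    by (intro closed_Collect_eq holomorphic_on_imp_continuous_on) (auto intro: continuous_intros)
  with assms show ?thesis
    by (meson bounded_ball bounded_subset compact_eq_bounded_closed)
qed

lemma mspec_le_radius:
  assumes "mspec (A::complex^'n^'n) \<subseteq> ball 0 r" "r > 0"
  obtains r1 where "0 < r1" "r1 < r" "\<And>z. z \<in> mspec A \<Longrightarrow> cmod z \<le> r1"
proof (cases "mspec A = {}")
  case True
  with assms show ?thesis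
    using that[of "r / 2"] by auto
next
  case False
  then obtain x where x: "x \<in> mspec A" "\<And>y. y \<in> mspec A \<Longrightarrow> cmod y \<le> cmod x"
    using continuous_attains_sup[OF compact_mspec[OF assms(1)] False, of cmod]
    by (auto intro: continuous_intros)
  have "cmod x < r" using x(1) assms(1) by auto
  show ?thesis
  proof (rule that[of "max (cmod x) (r / 2)"])
    show "0 < max (cmod x) (r / 2)" "max (cmod x) (r / 2) < r"
      using \<open>cmod x < r\<close> assms(2) by auto
    show "z \<in> mspec A \<Longrightarrow> cmod z \<le> max (cmod x) (r / 2)" for z
      using x(2) by (meson max.coboundedI1)
  qed
qed

lemma det_mat_minus_cscale_nonzero:
  assumes "\<And>w. w \<in> mspec (A::complex^'n^'n) \<Longrightarrow> cmod w \<le> r1" "0 < r1" "cmod z < 1 / r1"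
  shows "det (mat 1 - cscale z A) \<noteq> 0"
proof (cases "z = 0")
  case False
  have "mat 1 - cscale z A = cscale z (mat (1/z) - A)"
    using False by (simp add: vec_eq_iff mat_def algebra_simps)
  moreover have "cmod (1/z) > r1"
    using assms(2,3) False by (simp add: norm_divide field_simps)
  then have "1/z \<notin> mspec A"
    using assms(1) by force
  ultimately show ?thesis
    using False by (simp add: det_cscale mspec_def)
qed simp

lemma matrix_inv_entry_cramer:
  fixes M :: "complex^'n^'n"
  assumes "det M \<noteq> 0"
  shows "matrix_inv M $ a $ b = det (\<chi> i j. if j = a then axis b 1 $ i else M $ i $ j) / det M"
proof -
  have "M *v (matrix_inv M *v axis b 1) = axis b 1"
    using matrix_inv_mult[OF assms[folded invertible_det_nz]] by (simp add: matrix_vector_mul_assoc)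
  then have "matrix_inv M *v axis b 1 = (\<chi> k. det (\<chi> i j. if j = k then axis b 1 $ i else M $ i $ j) / det M)"
    using cramer[OF assms] by blast
  then have "column b (matrix_inv M) $ a = det (\<chi> i j. if j = a then axis b 1 $ i else M $ i $ j) / det M"
    by (simp add: column_eq_matrix_vector_mult_axis)
  then show ?thesis
    by (simp add: column_def)
qed

lemma suminf_power_inverse:
  fixes x :: "'a::{real_normed_algebra_1,banach}"
  assumes "norm x < 1"
  shows "(1 - x) * (\<Sum>n. x ^ n) = 1" "(\<Sum>n. x ^ n) * (1 - x) = 1"
proof -
  have sm: "summable (\<lambda>n. x ^ n)"
    by (rule complete_algebra_summable_geometric[OF assms])
  have "(\<lambda>n. x ^ n) \<longlonglongrightarrow> 0"
    by (rule Lim_null_comparison[where g="\<lambda>n. norm x ^ n"])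
      (use assms in \<open>auto intro!: always_eventually allI norm_power_ineq LIMSEQ_power_zero\<close>)
  then have tel: "(\<Sum>n. x ^ n - x ^ Suc n) = 1"
    using telescope_sums'[of "\<lambda>n. x ^ n"] sums_unique by fastforce
  have "(1 - x) * (\<Sum>n. x ^ n) = (\<Sum>n. (1 - x) * x ^ n)"
    by (rule suminf_mult[OF sm, symmetric])
  also have "\<dots> = (\<Sum>n. x ^ n - x ^ Suc n)"
    by (simp add: algebra_simps)
  also have "\<dots> = 1" by (rule tel)
  finally show "(1 - x) * (\<Sum>n. x ^ n) = 1" .
  have "(\<Sum>n. x ^ n) * (1 - x) = (\<Sum>n. x ^ n * (1 - x))"
    by (rule suminf_mult2[OF sm])
  also have "\<dots> = (\<Sum>n. x ^ n - x ^ Suc n)"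
    by (simp add: algebra_simps power_commutes)
  also have "\<dots> = 1" by (rule tel)
  finally show "(\<Sum>n. x ^ n) * (1 - x) = 1" .
qed

lemma norm_of_mat_cscale: "norm (of_mat (cscale z A)) \<le> cmod z * norm (of_mat A)"
proof -
  have "onorm ((*v) (cscale z A)) \<le> cmod z * onorm ((*v) A)"
  proof (rule onorm_bound)
    fix v
    have "cscale z A *v v = (\<chi> i. z * (A *v v) $ i)"
      by (simp add: vec_eq_iff matrix_vector_mult_def sum_distrib_left mult.assoc)
    then have "norm (cscale z A *v v) = cmod z * norm (A *v v)"
      by (simp add: norm_vec_def norm_mult L2_set_right_distrib)
    also have "\<dots> \<le> cmod z * (onorm ((*v) A) * norm v)"
      by (intro mult_left_mono onorm matrix_vector_mul_bounded_linear) simp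
    finally show "norm (cscale z A *v v) \<le> cmod z * onorm ((*v) A) * norm v"
      by (simp add: mult.assoc)
  qed (simp add: onorm_pos_le)
  then show ?thesis by (simp add: norm_sqmat.rep_eq)
qed

lemma resolvent_entry_sums:
  fixes A :: "complex^'n^'n"
  assumes "cmod z * norm (of_mat A) < 1"
  shows "(\<lambda>n. matpow A n $ a $ b * z ^ n) sums (matrix_inv (mat 1 - cscale z A) $ a $ b)"
proof -
  let ?x = "of_mat (cscale z A)"
  have small: "norm ?x < 1" using norm_of_mat_cscale[of z A] assms by linarith
  have "to_mat (1 - ?x) ** to_mat (\<Sum>n. ?x ^ n) = mat 1" "to_mat (\<Sum>n. ?x ^ n) ** to_mat (1 - ?x) = mat 1"
    using suminf_power_inverse[OF small] by (simp_all flip: to_mat_mult)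
  then have inv: "matrix_inv (mat 1 - cscale z A) = to_mat (\<Sum>n. ?x ^ n)"
    by (intro matrix_inv_unique) (simp_all add: minus_sqmat.rep_eq)
  have lin: "bounded_linear (\<lambda>x::'n sqmat. to_mat x $ a $ b)"
    by (intro bounded_linear_compose[OF bounded_linear_vec_nth] bounded_linear_to_mat)
  from bounded_linear.sums[OF lin summable_sums[OF complete_algebra_summable_geometric[OF small]]]
  show ?thesis
    by (simp add: inv to_mat_power matpow_cscale mult.commute)
qed

lemma resolvent_entry_holomorphic:
  assumes "\<And>w. w \<in> mspec (A::complex^'n^'n) \<Longrightarrow> cmod w \<le> r1" "0 < r1"
  shows "(\<lambda>z. matrix_inv (mat 1 - cscale z A) $ a $ b) holomorphic_on ball 0 (1 / r1)"
proof -
  have nz: "det (mat 1 - cscale z A) \<noteq> 0" if "z \<in> ball 0 (1 / r1)" for z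
    using that by (intro det_mat_minus_cscale_nonzero[OF assms]) auto
  have "(\<lambda>z. if j = a then axis b 1 $ i else (mat 1 - cscale z A) $ i $ j) holomorphic_on S"
    for i j and S :: "complex set"
    by (cases "j = a") (auto intro!: holomorphic_intros)
  then have num: "(\<lambda>z. det (\<chi> i j. if j = a then axis b 1 $ i else (mat 1 - cscale z A) $ i $ j))
      holomorphic_on ball 0 (1 / r1)"
    by (intro holomorphic_on_det) simp
  have den: "(\<lambda>z. det (mat 1 - cscale z A)) holomorphic_on ball 0 (1 / r1)"
    by (rule holomorphic_on_det holomorphic_on_mat_minus_cscale)+
  from holomorphic_on_divide[OF num den nz] show ?thesis
    by (rule holomorphic_cong[THEN iffD1, rotated 2]) (auto simp: matrix_inv_entry_cramer nz)
qed

lemma matpow_entry_eq_higher_deriv: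
  fixes A :: "complex^'n^'n"
  shows "matpow A n $ a $ b = (deriv ^^ n) (\<lambda>z. matrix_inv (mat 1 - cscale z A) $ a $ b) 0 / fact n"
proof -
  define g where "g z = matrix_inv (mat 1 - cscale z A) $ a $ b" for z
  define F where "F = Abs_fps (\<lambda>n. matpow A n $ a $ b)"
  define \<delta> where "\<delta> = 1 / (norm (of_mat A) + 1)"
  have pos: "norm (of_mat A) + 1 > 0"
    using norm_ge_zero[of "of_mat A"] by linarith
  then have \<delta>: "\<delta> > 0" by (simp add: \<delta>_def)
  have ser: "(\<lambda>n. fps_nth F n * z ^ n) sums g z" if "z \<in> ball 0 \<delta>" for z
  proof (unfold F_def g_def fps_nth_Abs_fps, rule resolvent_entry_sums)
    have "cmod z * norm (of_mat A) \<le> cmod z * (norm (of_mat A) + 1)"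
      by (simp add: mult_left_mono)
    also have "\<dots> < 1" using that pos by (simp add: \<delta>_def less_divide_eq)
    finally show "cmod z * norm (of_mat A) < 1" .
  qed
  have "fps_conv_radius F \<ge> norm (of_real (\<delta> / 2) :: complex)"
    unfolding fps_conv_radius_def
    by (rule conv_radius_geI) (use ser[of "of_real (\<delta> / 2)"] \<delta> in \<open>auto simp: sums_summable\<close>)
  then have "fps_conv_radius F > 0"
    using \<delta> by (simp add: less_le_trans[rotated])
  moreover have "eventually (\<lambda>z. z \<in> ball 0 \<delta>) (nhds 0)"
    using \<delta> by (intro eventually_nhds_in_open) auto
  then have "eventually (\<lambda>z. eval_fps F z = g z) (nhds 0)"
    by eventually_elim (use ser in \<open>auto simp: eval_fps_def sums_iff\<close>)
  ultimately have "g has_fps_expansion F"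
    by (simp add: has_fps_expansion_def)
  from fps_nth_fps_expansion[OF this, of n] show ?thesis
    by (simp add: F_def g_def[abs_def])
qed

text \<open>The entries of \<open>A\<^sup>n\<close> are Taylor coefficients of the resolvent,
  which is holomorphic on the disc of radius \<open>1 / max |\<sigma>(A)|\<close>.\<close>

lemma matpow_norm_le_geometric:
  fixes A :: "complex^'n^'n"
  assumes "mspec A \<subseteq> ball 0 r" "r > 0"
  obtains s C where "0 < s" "s < r" "\<And>n. norm (matpow A n) \<le> C * s ^ n"
proof -
  obtain r1 where r1: "0 < r1" "r1 < r" "\<And>z. z \<in> mspec A \<Longrightarrow> cmod z \<le> r1"
    using mspec_le_radius[OF assms] by blast
  define s where "s = (r1 + r) / 2"
  have s: "r1 < s" "s < r" "0 < s" using r1 by (auto simp: s_def)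
  have "\<exists>C. \<forall>n. cmod (matpow A n $ a $ b) \<le> C * s ^ n" for a b
  proof -
    let ?g = "\<lambda>z. matrix_inv (mat 1 - cscale z A) $ a $ b"
    have "cmod (of_real (1 / s)) = 1 / s"
      using s by (simp only: norm_of_real) simp
    also have "\<dots> < 1 / r1"
      using s r1 by (simp add: frac_less2)
    finally have "cmod (of_real (1 / s)) < 1 / r1" .
    then have "of_real (1 / s) \<in> ball (0::complex) (1 / r1)"
      by simp
    from holomorphic_power_series[OF resolvent_entry_holomorphic[OF r1(3,1)] this]
    have "(\<lambda>n. matpow A n $ a $ b * of_real (1 / s) ^ n) sums ?g (of_real (1 / s))"
      unfolding matpow_entry_eq_higher_deriv by simp
    then have "Bseq (\<lambda>n. matpow A n $ a $ b * of_real (1 / s) ^ n)"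
      by (intro convergent_imp_Bseq summable_LIMSEQ_zero[THEN convergentI] sums_summable)
    then obtain K where K: "\<And>n. norm (matpow A n $ a $ b * of_real (1 / s) ^ n) \<le> K"
      unfolding Bseq_def by blast
    have "cmod (matpow A n $ a $ b) \<le> K * s ^ n" for n
    proof -
      have "cmod (matpow A n $ a $ b) * (1 / s) ^ n \<le> K"
        using K[of n] s by (simp add: norm_mult norm_power norm_divide)
      then show ?thesis
        using s by (simp add: field_simps)
    qed
    then show ?thesis by blast
  qed
  then obtain C where C: "\<And>a b n. cmod (matpow A n $ a $ b) \<le> C a b * s ^ n"
    by metis
  have "norm (matpow A n) \<le> (\<Sum>a\<in>UNIV. \<Sum>b\<in>UNIV. C a b) * s ^ n" for n
  proof -
    have "norm (matpow A n) \<le> (\<Sum>a\<in>UNIV. \<Sum>b\<in>UNIV. C a b * s ^ n)"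
      by (rule order_trans[OF norm_le_sum_entries]) (intro sum_mono C)
    then show ?thesis by (simp add: sum_distrib_right)
  qed
  with s show ?thesis by (intro that) auto
qed


lemma higher_deriv_sum:
  fixes f :: "'a \<Rightarrow> complex \<Rightarrow> complex"
  assumes "finite J" "\<And>j. j \<in> J \<Longrightarrow> f j holomorphic_on S" "open S" "z \<in> S"
  shows "(deriv ^^ n) (\<lambda>w. \<Sum>j\<in>J. f j w) z = (\<Sum>j\<in>J. (deriv ^^ n) (f j) z)"
  using assms(1,2)
proof (induction J rule: finite_induct)
  case (insert a J)
  have "(deriv ^^ n) (\<lambda>w. f a w + (\<Sum>j\<in>J. f j w)) z =
      (deriv ^^ n) (f a) z + (deriv ^^ n) (\<lambda>w. \<Sum>j\<in>J. f j w) z"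
    by (rule higher_deriv_add) (use insert assms(3,4) in \<open>auto intro!: holomorphic_intros\<close>)
  with insert show ?case by simp
qed simp

lemma higher_deriv_div_ident:
  assumes h: "h holomorphic_on S" and g: "g holomorphic_on S" and "open S" "0 \<in> S"
    and eq: "\<And>w. w \<in> S \<Longrightarrow> w * h w = g w"
  shows "(deriv ^^ i) h 0 / fact i = (deriv ^^ Suc i) g 0 / fact (Suc i)"
proof -
  have "(deriv ^^ Suc i) g 0 = (deriv ^^ Suc i) (\<lambda>w. w * h w) 0"
    by (rule higher_deriv_transform_within_open[OF g _ \<open>open S\<close> \<open>0 \<in> S\<close>])
      (use h eq in \<open>auto intro!: holomorphic_intros\<close>)
  also have "\<dots> = (\<Sum>l = 0..Suc i. of_nat (Suc i choose l) * (deriv ^^ l) (\<lambda>w. w) 0 *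
      (deriv ^^ (Suc i - l)) h 0)"
    by (rule higher_deriv_mult[OF _ h \<open>open S\<close> \<open>0 \<in> S\<close>]) (auto intro: holomorphic_intros)
  also have "\<dots> = (\<Sum>l = 0..Suc i. if l = 1 then of_nat (Suc i) * (deriv ^^ i) h 0 else 0)"
    by (rule sum.cong) auto
  also have "\<dots> = of_nat (Suc i) * (deriv ^^ i) h 0"
    by simp
  finally show ?thesis
    by (simp add: field_simps del: of_nat_Suc)
qed

lemma summable_norm_taylor:
  assumes "f holomorphic_on ball 0 r" "0 \<le> s" "s < r"
  shows "summable (\<lambda>k. cmod ((deriv ^^ k) f 0 / fact k) * s ^ k)"
proof -
  let ?w = "complex_of_real ((s + r) / 2)"
  have "?w \<in> ball 0 r" "norm (complex_of_real s) < norm ?w"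
    using assms(2,3) by (simp_all only: norm_of_real mem_ball_0) auto
  from holomorphic_power_series[OF assms(1) this(1)]
  have "summable (\<lambda>k. (deriv ^^ k) f 0 / fact k * ?w ^ k)"
    by (simp add: sums_summable)
  from powser_insidea[OF this \<open>norm (complex_of_real s) < norm ?w\<close>]
  have "summable (\<lambda>k. norm ((deriv ^^ k) f 0 / fact k * (complex_of_real s) ^ k))" .
  moreover have "(\<lambda>k. norm ((deriv ^^ k) f 0 / fact k * (complex_of_real s) ^ k)) =
      (\<lambda>k. cmod ((deriv ^^ k) f 0 / fact k) * s ^ k)"
    using assms(2) by (simp only: norm_mult norm_power norm_of_real abs_of_nonneg)
  ultimately show ?thesis by simp
qed

lemma matfun_sums:
  fixes A :: "complex^'n^'n"
  assumes f: "f holomorphic_on ball 0 r" and spec: "mspec A \<subseteq> ball 0 r" and "r > 0"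
  shows "(\<lambda>k. cscale ((deriv ^^ k) f 0 / fact k) (matpow A k)) sums matfun f A"
proof -
  obtain s C where s: "0 < s" "s < r" and C: "\<And>k. norm (matpow A k) \<le> C * s ^ k"
    using matpow_norm_le_geometric[OF spec \<open>r > 0\<close>] by blast
  let ?c = "\<lambda>k. (deriv ^^ k) f 0 / fact k"
  have "norm (cscale (?c k) (matpow A k)) \<le> C * (cmod (?c k) * s ^ k)" for k
    using mult_left_mono[OF C norm_ge_zero[of "?c k"]] by (simp add: norm_cscale mult_ac)
  then have "summable (\<lambda>k. cscale (?c k) (matpow A k))"
    by (intro summable_comparison_test[OF _ summable_mult[OF summable_norm_taylor[OF f]]])
      (use s in auto)
  then show ?thesis
    by (simp add: matfun_def summable_sums)
qed


section \<open>The nonlinear eigenvalue problem\<close>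

locale nonlinear_eigenproblem =
  fixes r :: real and M :: "complex \<Rightarrow> complex^'n^'n" and m :: nat
    and Ms :: "nat \<Rightarrow> complex^'n^'n" and fs :: "nat \<Rightarrow> complex \<Rightarrow> complex"
    and B :: "complex \<Rightarrow> complex^'n^'n"
  assumes r_pos: "r > 0"
    and fs_hol: "\<And>j. j < m \<Longrightarrow> fs j holomorphic_on ball 0 r"
    and M_eq: "\<And>z. z \<in> ball 0 r \<Longrightarrow> M z = (\<Sum>j<m. cscale (fs j z) (Ms j))"
    and M0_inv: "invertible (M 0)"
    and B_eq: "\<And>z. z \<in> ball 0 r \<Longrightarrow> z \<noteq> 0 \<Longrightarrow>
                  B z = cscale (1 / z) (matrix_inv (M 0) ** (M 0 - M z))"
    and B_hol: "\<And>a b. (\<lambda>z. B z $ a $ b) holomorphic_on ball 0 r"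
begin

definition Mtaylor :: "nat \<Rightarrow> complex^'n^'n" where
  "Mtaylor k = (\<Sum>j<m. cscale ((deriv ^^ k) (fs j) 0 / fact k) (Ms j))"

lemma Mtaylor_0: "Mtaylor 0 = M 0"
  using r_pos by (simp add: Mtaylor_def M_eq)

text \<open>From \<open>\<lambda> B(\<lambda>) = M(0)\<^sup>-\<^sup>1 (M(0) - M(\<lambda>))\<close>.\<close>

lemma Bcoef_eq_Mtaylor: "cscale (1 / fact i) (Bcoef B i) = - (matrix_inv (M 0) ** Mtaylor (Suc i))"
proof -
  let ?N = "matrix_inv (M 0)"
  have "(deriv ^^ i) (\<lambda>z. B z $ a $ b) 0 / fact i = (- (?N ** Mtaylor (Suc i))) $ a $ b" for a b
  proof -
    define K where "K j = (?N ** Ms j) $ a $ b" for j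
    define g where "g w = (?N ** M 0) $ a $ b - (\<Sum>j<m. fs j w * K j)" for w
    have NM: "(?N ** M w) $ a $ b = (\<Sum>j<m. fs j w * K j)" if "w \<in> ball 0 r" for w
      using that by (simp add: M_eq matrix_mul_sum_right matrix_mul_cscale_right K_def)
    have g_hol: "g holomorphic_on ball 0 r"
      unfolding g_def by (intro holomorphic_intros) (auto intro: fs_hol)
    have "w * B w $ a $ b = g w" if "w \<in> ball 0 r" for w
    proof (cases "w = 0")
      case True
      then show ?thesis using NM[OF that] by (simp add: g_def)
    next
      case False
      then show ?thesis
        using NM[OF that] by (simp add: B_eq[OF that False] g_def matrix_diff_ldistrib)
    qed
    from higher_deriv_div_ident[OF B_hol g_hol _ _ this]
    have "(deriv ^^ i) (\<lambda>z. B z $ a $ b) 0 / fact i = (deriv ^^ Suc i) g 0 / fact (Suc i)"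
      using r_pos by simp
    also have "(deriv ^^ Suc i) g 0 = - (\<Sum>j<m. (deriv ^^ Suc i) (fs j) 0 * K j)"
    proof -
      have "(deriv ^^ Suc i) g 0 = - (deriv ^^ Suc i) (\<lambda>w. \<Sum>j<m. fs j w * K j) 0"
        unfolding g_def using r_pos
        by (subst higher_deriv_diff[where S="ball 0 r"]) (auto intro!: holomorphic_intros fs_hol)
      also have "\<dots> = - (\<Sum>j<m. (deriv ^^ Suc i) (\<lambda>w. K j * fs j w) 0)"
        using r_pos by (subst higher_deriv_sum[where S="ball 0 r"])
          (auto intro!: holomorphic_intros fs_hol simp: mult.commute)
      also have "\<dots> = - (\<Sum>j<m. (deriv ^^ Suc i) (fs j) 0 * K j)"
        by (subst mult.commute, intro arg_cong[where f=uminus] sum.cong refl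
            higher_deriv_cmult[where A="ball 0 r"]) (use r_pos in \<open>auto intro: fs_hol\<close>)
      finally show ?thesis .
    qed
    finally show ?thesis
      by (simp add: Mtaylor_def matrix_mul_sum_right matrix_mul_cscale_right K_def
          sum_divide_distrib sum_negf)
  qed
  then show ?thesis
    by (simp add: vec_eq_iff Bcoef_def)
qed

lemma Mtaylor_series_sums:
  fixes \<Lambda> :: "complex^'p^'p" and Y :: "complex^'p^'n"
  assumes spec: "mspec \<Lambda> \<subseteq> ball 0 r"
  shows "(\<lambda>k. Mtaylor k ** Y ** matpow \<Lambda> k) sums (\<Sum>j<m. Ms j ** Y ** matfun (fs j) \<Lambda>)"
proof -
  have "(\<lambda>k. Ms j ** Y ** cscale ((deriv ^^ k) (fs j) 0 / fact k) (matpow \<Lambda> k)) sums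
      (Ms j ** Y ** matfun (fs j) \<Lambda>)" if "j < m" for j
    by (rule bounded_linear.sums[OF bounded_linear_matrix_mul_right
          matfun_sums[OF fs_hol[OF that] spec r_pos]])
  then have "(\<lambda>k. \<Sum>j<m. Ms j ** Y ** cscale ((deriv ^^ k) (fs j) 0 / fact k) (matpow \<Lambda> k)) sums
      (\<Sum>j<m. Ms j ** Y ** matfun (fs j) \<Lambda>)"
    by (intro sums_sum) simp
  then show ?thesis
    by (simp add: Mtaylor_def matrix_mul_sum_left matrix_mul_cscale_left matrix_mul_cscale_right)
qed

lemma Bcoef_series_sums:
  fixes \<Lambda> :: "complex^'p^'p" and Y :: "complex^'p^'n"
  assumes inv: "invertible \<Lambda>" and spec: "mspec \<Lambda> \<subseteq> ball 0 r"
  defines "\<MM> \<equiv> \<Sum>j<m. Ms j ** Y ** matfun (fs j) \<Lambda>"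
  shows "(\<lambda>i. cscale (1 / fact i) (Bcoef B i) ** Y ** matpow \<Lambda> i) sums
      - (matrix_inv (M 0) ** (\<MM> - M 0 ** Y) ** matrix_inv \<Lambda>)"
proof -
  have "(\<lambda>i. Mtaylor (Suc i) ** Y ** matpow \<Lambda> (Suc i)) sums (\<MM> - M 0 ** Y)"
    using Mtaylor_series_sums[OF spec, of Y, folded \<MM>_def]
      sums_Suc_iff[of "\<lambda>k. Mtaylor k ** Y ** matpow \<Lambda> k" "\<MM> - M 0 ** Y"]
    by (simp add: Mtaylor_0)
  from bounded_linear.sums[OF bounded_linear_matrix_mul_left[of "matrix_inv \<Lambda>"] this]
  have "(\<lambda>i. Mtaylor (Suc i) ** Y ** matpow \<Lambda> (Suc i) ** matrix_inv \<Lambda>) sums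
      ((\<MM> - M 0 ** Y) ** matrix_inv \<Lambda>)" .
  moreover have "X ** matpow \<Lambda> (Suc i) ** matrix_inv \<Lambda> = X ** matpow \<Lambda> i" for X :: "complex^'p^'n" and i
    by (simp add: matpow_Suc' matrix_inv_mult[OF inv] flip: matrix_mul_assoc)
  ultimately have "(\<lambda>i. Mtaylor (Suc i) ** Y ** matpow \<Lambda> i) sums ((\<MM> - M 0 ** Y) ** matrix_inv \<Lambda>)"
    by (simp only:)
  from bounded_linear.sums[OF bounded_linear_matrix_mul_right[of "- matrix_inv (M 0)"] this]
  show ?thesis
    unfolding Bcoef_eq_Mtaylor by (simp only: matrix_mul_assoc matrix_mul_uminus_left)
qed

theorem inv_pair_mexp_iff_eigen:
  fixes \<Lambda> :: "complex^'p^'p" and Y :: "complex^'p^'n"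
  assumes inv: "invertible \<Lambda>" and spec: "mspec \<Lambda> \<subseteq> ball 0 r"
  shows "inv_pair B (\<lambda>\<theta>. Y ** mexp (\<theta> *\<^sub>R \<Lambda>)) (matrix_inv \<Lambda>) \<longleftrightarrow>
    (\<Sum>j<m. Ms j ** Y ** matfun (fs j) \<Lambda>) = 0"
proof -
  let ?N = "matrix_inv (M 0)" and ?L = "matrix_inv \<Lambda>" and ?\<MM> = "\<Sum>j<m. Ms j ** Y ** matfun (fs j) \<Lambda>"
  have "- (?N ** (?\<MM> - M 0 ** Y) ** ?L) = Y ** ?L \<longleftrightarrow> ?N ** ?\<MM> ** ?L = 0"
    using matrix_inv_mult[OF M0_inv]
    by (simp add: matrix_diff_ldistrib matrix_diff_rdistrib matrix_mul_assoc)
  also have "\<dots> \<longleftrightarrow> ?\<MM> = 0"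
  proof
    assume "?N ** ?\<MM> ** ?L = 0"
    then have "M 0 ** (?N ** ?\<MM> ** ?L) ** \<Lambda> = 0" by simp
    moreover have "M 0 ** (?N ** ?\<MM> ** ?L) ** \<Lambda> = (M 0 ** ?N) ** ?\<MM> ** (?L ** \<Lambda>)"
      by (simp add: matrix_mul_assoc)
    ultimately show "?\<MM> = 0"
      using matrix_inv_mult[OF M0_inv] matrix_inv_mult[OF inv] by simp
  qed simp
  finally show ?thesis
    by (simp only: inv_pair_mexp_iff[OF inv Bcoef_series_sums[OF inv spec]])
qed

end

theorem mainTheorem1:
  fixes r :: real and M :: "complex \<Rightarrow> complex^'n^'n" and m :: nat
    and Ms :: "nat \<Rightarrow> complex^'n^'n" and fs :: "nat \<Rightarrow> complex \<Rightarrow> complex"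
    and B :: "complex \<Rightarrow> complex^'n^'n"
  assumes r_pos: "r > 0"
    and fs_hol: "\<And>j. j < m \<Longrightarrow> fs j holomorphic_on ball 0 r"
    and M_eq: "\<And>z. z \<in> ball 0 r \<Longrightarrow> M z = (\<Sum>j<m. cscale (fs j z) (Ms j))"
    and M0_inv: "invertible (M 0)"
    and B_eq: "\<And>z. z \<in> ball 0 r \<Longrightarrow> z \<noteq> 0 \<Longrightarrow>
                  B z = cscale (1 / z) (matrix_inv (M 0) ** (M 0 - M z))"
    and B_hol: "\<And>a b. (\<lambda>z. B z $ a $ b) holomorphic_on ball 0 r"
  shows
    "(\<forall>(\<Psi> :: real \<Rightarrow> complex^'p^'n) (\<Lambda> :: complex^'p^'p).
        invertible \<Lambda> \<and> inv_pair B \<Psi> (matrix_inv \<Lambda>) \<longrightarrow>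
        (\<exists>Y :: complex^'p^'n. \<forall>\<theta>. \<Psi> \<theta> = Y ** mexp (\<theta> *\<^sub>R \<Lambda>)))
     \<and>
     (\<forall>(\<Lambda> :: complex^'p^'p) (Y :: complex^'p^'n).
        invertible \<Lambda> \<and> mspec \<Lambda> \<subseteq> ball 0 r \<longrightarrow>
        (inv_pair B (\<lambda>\<theta>. Y ** mexp (\<theta> *\<^sub>R \<Lambda>)) (matrix_inv \<Lambda>)
         \<longleftrightarrow> (\<Sum>j<m. Ms j ** Y ** matfun (fs j) \<Lambda>) = 0))"
proof (intro conjI allI impI)
  fix \<Psi> :: "real \<Rightarrow> complex^'p^'n" and \<Lambda> :: "complex^'p^'p"
  assume "invertible \<Lambda> \<and> inv_pair B \<Psi> (matrix_inv \<Lambda>)"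
  then show "\<exists>Y. \<forall>\<theta>. \<Psi> \<theta> = Y ** mexp (\<theta> *\<^sub>R \<Lambda>)"
    using inv_pair_imp_mexp by blast
next
  interpret nonlinear_eigenproblem r M m Ms fs B
    by unfold_locales (fact assms)+
  fix \<Lambda> :: "complex^'p^'p" and Y :: "complex^'p^'n"
  assume "invertible \<Lambda> \<and> mspec \<Lambda> \<subseteq> ball 0 r"
  then show "inv_pair B (\<lambda>\<theta>. Y ** mexp (\<theta> *\<^sub>R \<Lambda>)) (matrix_inv \<Lambda>) \<longleftrightarrow>
      (\<Sum>j<m. Ms j ** Y ** matfun (fs j) \<Lambda>) = 0"
    using inv_pair_mexp_iff_eigen by blast
qed

end
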